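(* Let $u$ be a word, let $s$ be a nonempty factor of $u$, and let $w$ be the shortest element of $\mathrm{Nodes}(u)$ such that $s$ is a prefix of $w$. Then $s$ is a seed of $u$ if and only if $|s|\ge\Delta(w)$ and $s$ is a border seed of $u$.
   Context: For a factor $v$ of $u$, $\mathrm{Occ}(v,u)$ is the set of starting positions of occurrences of $v$ in $u$, $\mathit{first}(v)=\min\mathrm{Occ}(v,u)$, $\mathit{last}(v)=\max\mathrm{Occ}(v,u)$. For a finite set $X$ of integers, $\mathrm{maxgap}(X)$ is the maximum of $b-a$ over consecutive elements $a<b$ of $X$, or $0$ if $|X|\le1$; $\mathrm{maxgap}(v)=\mathrm{maxgap}(\mathrm{Occ}(v,u))$. $\mathrm{Nodes}(u)$ is the set of factors of $u$ corresponding to explicit nodes of the suffix tree of $u$ (the root, the branching nodes and the leaves). For $w\in\mathrm{Nodes}(u)$, $\Delta(w)=\max\{\mathrm{maxgap}(x): x \text{ a prefix of } w\}$. A word $s$ covers $y$ if every position of $y$ lies in some occurrence of $s$ in $y$. A seed of $u$ is a factor $s$ of $u$ such that $u$ is a factor of some word covered by $s$. Writing $u=w_1w_2w_3$ with $w_2=u[\mathit{first}(s)..\mathit{last}(s)+|s|-1]$, $s$ is a border seed of $u$ if $s$ is a seed of $w_1\,s\,w_3$. *)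

theory Defs
  imports "HOL-Library.Sublist"
begin

text \<open>Words are lists; positions are 0-based. Factor = contiguous sublist.\<close>

definition Occ :: "'a list \<Rightarrow> 'a list \<Rightarrow> nat set" where
  "Occ v u = {i. i + length v \<le> length u \<and> take (length v) (drop i u) = v}"

definition first_occ :: "'a list \<Rightarrow> 'a list \<Rightarrow> nat" where
  "first_occ v u = Min (Occ v u)"

definition last_occ :: "'a list \<Rightarrow> 'a list \<Rightarrow> nat" where
  "last_occ v u = Max (Occ v u)"

definition maxgap_set :: "nat set \<Rightarrow> nat" where
  "maxgap_set X = (if card X \<le> 1 then 0 else
     Max {b - a | a b. a \<in> X \<and> b \<in> X \<and> a < b \<and> \<not> (\<exists>c\<in>X. a < c \<and> c < b)})"

definition maxgap :: "'a list \<Rightarrow> 'a list \<Rightarrow> nat" where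
  "maxgap v u = maxgap_set (Occ v u)"

text \<open>Explicit nodes of the suffix tree of u: the root (empty word), and the
  factors with a number of distinct right extensions different from one
  (branching nodes: at least two; leaves: none).\<close>
definition Nodes :: "'a list \<Rightarrow> 'a list set" where
  "Nodes u = {[]} \<union> {v. sublist v u \<and> card {a. sublist (v @ [a]) u} \<noteq> 1}"

definition Delta :: "'a list \<Rightarrow> 'a list \<Rightarrow> nat" where
  "Delta w u = Max {maxgap x u | x. prefix x w}"

definition covers :: "'a list \<Rightarrow> 'a list \<Rightarrow> bool" where
  "covers s y = (\<forall>i < length y. \<exists>j \<in> Occ s y. j \<le> i \<and> i < j + length s)"

definition seed :: "'a list \<Rightarrow> 'a list \<Rightarrow> bool" where
  "seed s u = (sublist s u \<and> (\<exists>y. covers s y \<and> sublist u y))"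

definition border_seed :: "'a list \<Rightarrow> 'a list \<Rightarrow> bool" where
  "border_seed s u = seed s (take (first_occ s u) u @ s @ drop (last_occ s u + length s) u)"

end

theory Submission
  imports Defs
begin

text \<open>Write \<open>u = A M B\<close> where \<open>M\<close> runs from the first to the last occurrence of \<open>s\<close>, so that
  \<open>M\<close> begins and ends with \<open>s\<close>. In a word covered by \<open>s\<close>, the positions outside \<open>M\<close> are
  covered by occurrences lying inside \<open>A s\<close> or \<open>s B\<close>; hence \<open>M\<close> may be replaced by \<open>s\<close>, and
  \<open>s\<close> by \<open>M\<close> whenever \<open>M\<close> itself is covered by \<open>s\<close>, i.e. whenever consecutive occurrences
  of \<open>s\<close> in \<open>u\<close> are at most \<open>|s|\<close> apart. This gives the border seed condition, and the
  converse as soon as \<open>maxgap(s) \<le> |s|\<close>, which \<open>\<Delta>(w) \<le> |s|\<close> implies.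

  For \<open>\<Delta>(w)\<close>: no explicit node lies strictly between \<open>s\<close> and \<open>w\<close>, so every occurrence of
  \<open>s\<close> extends uniquely along \<open>w\<close> as far as \<open>u\<close> allows. Thus an occurrence of \<open>s\<close> in a
  word covering \<open>u\<close> yields an occurrence in \<open>u\<close> of each prefix \<open>x\<close> of \<open>w\<close> at the same
  position, and any gap longer than \<open>|s|\<close> between occurrences of \<open>x\<close> would contain one.\<close>

lemma finite_Occ: "finite (Occ v u)"
  by (rule finite_subset[of _ "{..length u}"]) (auto simp: Occ_def)

lemma Occ_imp_length_le: "i \<in> Occ v u \<Longrightarrow> i + length v \<le> length u"
  by (simp add: Occ_def)

lemma Occ_append_shift_iff:
  assumes "i + length v \<le> length u"
  shows "length P + i \<in> Occ v (P @ u @ Q) \<longleftrightarrow> i \<in> Occ v u"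
  using assms by (simp add: Occ_def)

lemma Occ_shift: "i \<in> Occ v u \<Longrightarrow> length P + i \<in> Occ v (P @ u @ Q)"
  by (simp add: Occ_append_shift_iff Occ_imp_length_le)

lemma Occ_drop: "i \<in> Occ v u \<Longrightarrow> drop i u = v @ drop (i + length v) u"
  using append_take_drop_id[of "length v" "drop i u"] by (simp add: Occ_def add.commute)

lemma Occ_split: "i \<in> Occ v u \<Longrightarrow> u = take i u @ v @ drop (i + length v) u"
  using append_take_drop_id[of i u] Occ_drop by metis

lemma sublist_iff_Occ_nonempty: "sublist v u \<longleftrightarrow> Occ v u \<noteq> {}"
proof
  assume "sublist v u"
  then obtain p q where "u = p @ v @ q" by (auto simp: sublist_def)
  then have "length p \<in> Occ v u" by (simp add: Occ_def)
  then show "Occ v u \<noteq> {}" by blast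
next
  assume "Occ v u \<noteq> {}"
  then show "sublist v u" using Occ_split by (metis ex_in_conv sublist_appendI)
qed

lemma Occ_take:
  assumes "i \<in> Occ v u" "k \<le> length v"
  shows "i \<in> Occ (take k v) u"
proof -
  have "take k v = take k (drop i u)"
    using assms take_take[of k "length v" "drop i u"] by (simp add: Occ_def min_absorb1)
  then show ?thesis using assms by (auto simp: Occ_def min_def)
qed

lemma Occ_snoc_nth:
  assumes "i \<in> Occ x u" "i + length x < length u"
  shows "i \<in> Occ (x @ [u ! (i + length x)]) u"
  using assms take_Suc_conv_app_nth[of "length x" "drop i u"] by (simp add: Occ_def)

definition consecutive :: "nat set \<Rightarrow> nat \<Rightarrow> nat \<Rightarrow> bool" where
  "consecutive X a b \<longleftrightarrow> a \<in> X \<and> b \<in> X \<and> a < b \<and> \<not> (\<exists>c\<in>X. a < c \<and> c < b)"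

lemma consecutive_successor:
  assumes "finite X" "a \<in> X" "b \<in> X" "a < b"
  obtains c where "consecutive X a c" "c \<le> b"
proof
  let ?C = "{c \<in> X. a < c}"
  have C: "finite ?C" "b \<in> ?C" using assms by auto
  show "Min ?C \<le> b" using Min_le[OF C] .
  have "Min ?C \<in> ?C" using Min_in C by blast
  moreover have "\<not> c < Min ?C" if "c \<in> X" "a < c" for c
    using Min_le[OF C(1)] that by (simp add: not_less)
  ultimately show "consecutive X a (Min ?C)"
    using assms(2) unfolding consecutive_def by blast
qed

lemma card_le_1_iff_no_consecutive:
  assumes "finite X"
  shows "card X \<le> 1 \<longleftrightarrow> \<not> (\<exists>a b. consecutive X a b)"
proof
  assume "card X \<le> 1"
  then show "\<not> (\<exists>a b. consecutive X a b)"
    using assms by (auto simp: consecutive_def card_le_Suc0_iff_eq)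
next
  assume none: "\<not> (\<exists>a b. consecutive X a b)"
  show "card X \<le> 1"
  proof (rule ccontr)
    assume "\<not> card X \<le> 1"
    then obtain x y where "x \<in> X" "y \<in> X" "x \<noteq> y"
      using assms by (auto simp: card_le_Suc0_iff_eq)
    then have "min x y \<in> X" "max x y \<in> X" "min x y < max x y"
      by (auto simp: min_def max_def)
    then obtain c where "consecutive X (min x y) c" by (rule consecutive_successor[OF assms])
    with none show False by blast
  qed
qed

lemma maxgap_set_le_iff:
  assumes "finite X"
  shows "maxgap_set X \<le> m \<longleftrightarrow> (\<forall>a b. consecutive X a b \<longrightarrow> b - a \<le> m)"
proof (cases "card X \<le> 1")
  case True
  then show ?thesis using card_le_1_iff_no_consecutive[OF assms] by (simp add: maxgap_set_def)
next
  case False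
  let ?G = "{b - a | a b. consecutive X a b}"
  have "?G \<subseteq> (\<lambda>(a, b). b - a) ` (X \<times> X)" by (auto simp: consecutive_def)
  then have "finite ?G" using assms by (meson finite_SigmaI finite_imageI finite_subset)
  moreover have "?G \<noteq> {}" using False card_le_1_iff_no_consecutive[OF assms] by blast
  moreover have "maxgap_set X = Max ?G"
    using False by (simp add: maxgap_set_def consecutive_def)
  ultimately show ?thesis by (simp add: Max_le_iff) blast
qed

lemma maxgap_set_le_imp_cover:
  assumes "finite X" "X \<noteq> {}" "maxgap_set X \<le> m" "Min X \<le> i" "i < Max X + m"
  shows "\<exists>j\<in>X. j \<le> i \<and> i < j + m"
proof (rule ccontr)
  assume uncovered: "\<not> ?thesis"
  let ?L = "{a \<in> X. a \<le> i}"
  define j where "j = Max ?L"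
  have "finite ?L" "Min X \<in> ?L" using assms by auto
  then have j: "j \<in> X" "j \<le> i" and j_max: "\<And>a. a \<in> X \<Longrightarrow> a \<le> i \<Longrightarrow> a \<le> j"
    unfolding j_def using Max_in Max_ge by blast+
  have "j + m \<le> i" using uncovered j by force
  then have "j < Max X" using assms(5) by linarith
  then obtain c where c: "consecutive X j c" using consecutive_successor assms(1,2) j(1) Max_in
    by metis
  then have "c \<le> i" using assms(3) maxgap_set_le_iff[OF assms(1)] \<open>j + m \<le> i\<close> by fastforce
  then show False using c j_max unfolding consecutive_def by fastforce
qed

definition covered_at :: "'a list \<Rightarrow> 'a list \<Rightarrow> nat \<Rightarrow> bool" where
  "covered_at s y i \<longleftrightarrow> (\<exists>j\<in>Occ s y. j \<le> i \<and> i < j + length s)"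

lemma covers_iff_covered_at: "covers s y \<longleftrightarrow> (\<forall>i < length y. covered_at s y i)"
  by (simp add: covers_def covered_at_def)

lemma covered_at_infix:
  assumes "covered_at s M i"
  shows "covered_at s (X @ M @ Z) (length X + i)"
proof -
  obtain j where "j \<in> Occ s M" "j \<le> i" "i < j + length s"
    using assms unfolding covered_at_def by blast
  then show ?thesis
    unfolding covered_at_def using Occ_shift[of j s M X Z] by (intro bexI[of _ "length X + j"]) auto
qed

lemma covered_at_left_of_occurrence:
  assumes "covered_at s (X @ s @ Y) i" "i < length X"
  shows "covered_at s (X @ s @ Y') i"
proof -
  obtain j where j: "j \<in> Occ s (X @ s @ Y)" "j \<le> i" "i < j + length s"
    using assms(1) unfolding covered_at_def by blast
  have "j + length s \<le> length (X @ s)" using j(2) assms(2) by simp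
  then have "j \<in> Occ s (X @ s)"
    using j(1) Occ_append_shift_iff[of j s "X @ s" "[]" Y] by simp
  then have "j \<in> Occ s (X @ s @ Y')"
    using Occ_shift[of j s "X @ s" "[]" Y'] by simp
  with j show ?thesis unfolding covered_at_def by blast
qed

lemma covered_at_right_of_occurrence:
  assumes "covered_at s (Y @ s @ Z) (length Y + length s + i)"
  shows "covered_at s (Y' @ s @ Z) (length Y' + length s + i)"
proof -
  obtain j where j: "j \<in> Occ s (Y @ s @ Z)" "j \<le> length Y + length s + i"
      "length Y + length s + i < j + length s"
    using assms unfolding covered_at_def by blast
  define d where "d = j - length Y"
  have j_eq: "j = length Y + d" using j(3) unfolding d_def by simp
  have "d + length s \<le> length (s @ Z)" using Occ_imp_length_le[OF j(1)] j_eq by simp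
  then have "d \<in> Occ s (s @ Z)"
    using j(1) Occ_append_shift_iff[of d s "s @ Z" Y "[]"] j_eq by simp
  then have "length Y' + d \<in> Occ s (Y' @ s @ Z)"
    using Occ_shift[of d s "s @ Z" Y' "[]"] by simp
  moreover have "length Y' + d \<le> length Y' + length s + i"
    "length Y' + length s + i < length Y' + d + length s"
    using j j_eq by simp_all
  ultimately show ?thesis unfolding covered_at_def by blast
qed

lemma covers_replace_middle:
  assumes "prefix s M" "suffix s M" "prefix s M'" "suffix s M'"
    and "covers s (X @ M @ Z)" "covers s M'"
  shows "covers s (X @ M' @ Z)"
  unfolding covers_iff_covered_at
proof (intro allI impI)
  fix i assume i: "i < length (X @ M' @ Z)"
  obtain R R' where R: "M = s @ R" "M' = s @ R'"
    using assms(1,3) by (auto simp: prefix_def)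
  obtain L L' where L: "M = L @ s" "M' = L' @ s"
    using assms(2,4) by (auto simp: suffix_def)
  have cov: "covered_at s (X @ M @ Z) k" if "k < length (X @ M @ Z)" for k
    using assms(5) that unfolding covers_iff_covered_at by blast
  consider "i < length X" | "length X \<le> i" "i < length X + length M'"
    | "length X + length M' \<le> i" by linarith
  then show "covered_at s (X @ M' @ Z) i"
  proof cases
    case 1
    then show ?thesis
      using covered_at_left_of_occurrence[of s X "R @ Z" i "R' @ Z"] cov[of i] R by simp
  next
    case 2
    then show ?thesis
      using covered_at_infix[of s M' "i - length X" X Z] assms(6)
      unfolding covers_iff_covered_at by simp
  next
    case 3
    define k where "k = i - (length X + length M')"
    have "i = length X + length M' + k" "k < length Z" using i 3 unfolding k_def by simp_all
    then show ?thesis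
      using covered_at_right_of_occurrence[of s "X @ L" Z k "X @ L'"] cov[of "length X + length M + k"] L
      by (simp add: add.assoc)
  qed
qed

lemma covers_maxgap_le:
  assumes cov: "covers s (P @ u @ Q)"
    and occ: "\<And>i. i + length x \<le> length u \<Longrightarrow> length P + i \<in> Occ s (P @ u @ Q) \<Longrightarrow> i \<in> Occ x u"
  shows "maxgap x u \<le> length s"
  unfolding maxgap_def maxgap_set_le_iff[OF finite_Occ]
proof (intro allI impI)
  fix a b assume ab: "consecutive (Occ x u) a b"
  show "b - a \<le> length s"
  proof (rule ccontr)
    assume "\<not> b - a \<le> length s"
    then have gap: "a + length s < b" by simp
    have b_len: "b + length x \<le> length u"
      using ab Occ_imp_length_le unfolding consecutive_def by blast
    then have "covered_at s (P @ u @ Q) (length P + a + length s)"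
      using cov gap unfolding covers_iff_covered_at by simp
    then obtain j where j: "j \<in> Occ s (P @ u @ Q)" "j \<le> length P + a + length s"
        "length P + a + length s < j + length s"
      unfolding covered_at_def by blast
    define i where "i = j - length P"
    have i: "j = length P + i" "a < i" "i < b" using j gap unfolding i_def by auto
    then have "i \<in> Occ x u" using occ j(1) b_len by simp
    with i ab show False unfolding consecutive_def by blast
  qed
qed

lemma covers_self: "covers s s"
  unfolding covers_def by (auto simp: Occ_def intro: bexI[of _ 0])

lemma seed_replace_middle:
  assumes "prefix s M" "suffix s M" "prefix s M'" "suffix s M'" "covers s M'"
    and "seed s (A @ M @ B)"
  shows "seed s (A @ M' @ B)"
proof -
  obtain P Q where "covers s (P @ (A @ M @ B) @ Q)"
    using assms(6) by (auto simp: seed_def sublist_def)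
  then have "covers s ((P @ A) @ M' @ (B @ Q))"
    using covers_replace_middle[OF assms(1-4), of "P @ A" "B @ Q"] assms(5) by simp
  moreover have "sublist (A @ M' @ B) ((P @ A) @ M' @ (B @ Q))"
    using sublist_appendI[of "A @ M' @ B" P Q] by simp
  moreover have "sublist s (A @ M' @ B)"
    using sublist_order.order.trans[OF prefix_imp_sublist[OF assms(3)] sublist_appendI] .
  ultimately show ?thesis unfolding seed_def by blast
qed

lemma border_split:
  assumes "sublist s u"
  obtains A M B where "u = A @ M @ B" "prefix s M" "suffix s M"
    "length A = first_occ s u" "length A + length M = last_occ s u + length s"
    "border_seed s u \<longleftrightarrow> seed s (A @ s @ B)"
proof -
  let ?f = "first_occ s u" and ?l = "last_occ s u"
  have ne: "Occ s u \<noteq> {}" using assms sublist_iff_Occ_nonempty by blast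
  have f: "?f \<in> Occ s u" and l: "?l \<in> Occ s u"
    using Min_in[OF finite_Occ ne] Max_in[OF finite_Occ ne] unfolding first_occ_def last_occ_def .
  have "?f \<le> ?l" using Min_le[OF finite_Occ l] unfolding first_occ_def .
  define M where "M = drop ?f (take (?l + length s) u)"
  have take_l: "take (?l + length s) u = take ?l u @ s"
    using l by (simp add: take_add Occ_def)
  have "take ?f u @ M = take (?l + length s) u"
    unfolding M_def using append_take_drop_id[of ?f "take (?l + length s) u"] \<open>?f \<le> ?l\<close>
    by (simp add: min_def)
  then have u: "u = take ?f u @ M @ drop (?l + length s) u"
    using append_take_drop_id[of "?l + length s" u] by (metis append_assoc)
  show ?thesis
  proof
    show "u = take ?f u @ M @ drop (?l + length s) u" by (rule u)
    show "prefix s M"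
      unfolding M_def using \<open>?f \<le> ?l\<close> Occ_drop[OF f] by (simp add: drop_take)
    show "suffix s M"
      unfolding M_def take_l using \<open>?f \<le> ?l\<close> Occ_imp_length_le[OF l] by (simp add: suffix_def)
    show "length (take ?f u) = ?f" "length (take ?f u) + length M = ?l + length s"
      unfolding M_def using \<open>?f \<le> ?l\<close> Occ_imp_length_le[OF l] by simp_all
    show "border_seed s u \<longleftrightarrow> seed s (take ?f u @ s @ drop (?l + length s) u)"
      by (simp add: border_seed_def)
  qed
qed

lemma maxgap_le_imp_covers_middle:
  assumes "sublist s u" "maxgap s u \<le> length s" "u = A @ M @ B"
    and "length A = first_occ s u" "length A + length M = last_occ s u + length s"
  shows "covers s M"
  unfolding covers_iff_covered_at
proof (intro allI impI)
  fix i assume i: "i < length M"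
  have ne: "Occ s u \<noteq> {}" using assms(1) sublist_iff_Occ_nonempty by blast
  have "Min (Occ s u) \<le> length A + i" "length A + i < Max (Occ s u) + length s"
    using assms(4,5) i unfolding first_occ_def last_occ_def by simp_all
  then obtain j where j: "j \<in> Occ s u" "j \<le> length A + i" "length A + i < j + length s"
    using maxgap_set_le_imp_cover[OF finite_Occ ne] assms(2) unfolding maxgap_def by blast
  have "length A \<le> j" using Min_le[OF finite_Occ j(1)] assms(4) unfolding first_occ_def by simp
  have "j + length s \<le> length A + length M"
    using Max_ge[OF finite_Occ j(1)] assms(5) unfolding last_occ_def by simp
  define k where "k = j - length A"
  have j_eq: "j = length A + k" using \<open>length A \<le> j\<close> unfolding k_def by simp
  have "length A + k \<in> Occ s (A @ M @ B)" using j(1) assms(3) j_eq by simp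
  then have "k \<in> Occ s M"
    using Occ_append_shift_iff[of k s M A B] \<open>j + length s \<le> length A + length M\<close> j_eq by simp
  moreover have "k \<le> i" "i < k + length s" using j j_eq by simp_all
  ultimately show "covered_at s M i" unfolding covered_at_def by blast
qed

lemma Nodes_imp_sublist: "w \<in> Nodes u \<Longrightarrow> sublist w u"
  by (auto simp: Nodes_def)

lemma right_extension_unique:
  assumes "x \<notin> Nodes u" "sublist (x @ [a]) u" "sublist (x @ [b]) u"
  shows "a = b"
proof -
  have "x \<noteq> []" using assms(1) by (auto simp: Nodes_def)
  moreover have "sublist x u" using sublist_order.order.trans[OF sublist_append_rightI assms(2)] .
  ultimately have "card {c. sublist (x @ [c]) u} = 1" using assms(1) by (simp add: Nodes_def)
  then obtain e where e: "{c. sublist (x @ [c]) u} = {e}" by (rule card_1_singletonE)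
  have "a \<in> {c. sublist (x @ [c]) u}" "b \<in> {c. sublist (x @ [c]) u}" using assms(2,3) by simp_all
  then show ?thesis unfolding e by simp
qed

definition locus :: "'a list \<Rightarrow> 'a list \<Rightarrow> 'a list \<Rightarrow> bool" where
  "locus u s w \<longleftrightarrow> w \<in> Nodes u \<and> prefix s w \<and> (\<forall>w' \<in> Nodes u. prefix s w' \<longrightarrow> length w \<le> length w')"

lemma Occ_extend_to_locus:
  assumes "locus u s w" "i \<in> Occ s u" "prefix x w" "i + length x \<le> length u"
  shows "i \<in> Occ x u"
  using assms(3,4)
proof (induction x rule: rev_induct)
  case Nil
  then show ?case by (simp add: Occ_def)
next
  case (snoc c x)
  have w: "w \<in> Nodes u" "prefix s w" "\<And>w'. w' \<in> Nodes u \<Longrightarrow> prefix s w' \<Longrightarrow> length w \<le> length w'"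
    using assms(1) unfolding locus_def by auto
  show ?case
  proof (cases "length (x @ [c]) \<le> length s")
    case True
    then have "prefix (x @ [c]) s" by (rule prefix_length_prefix[OF snoc.prems(1) w(2)])
    then have eq: "x @ [c] = take (length (x @ [c])) s" by (auto simp: prefix_def)
    show ?thesis by (subst eq) (rule Occ_take[OF assms(2) True])
  next
    case False
    have x_w: "prefix x w" using prefix_snocD[OF snoc.prems(1)] by (simp add: strict_prefix_def)
    have "prefix s x" by (rule prefix_length_prefix[OF w(2) x_w]) (use False in simp)
    have "length (x @ [c]) \<le> length w" by (rule prefix_length_le[OF snoc.prems(1)])
    have "x \<notin> Nodes u"
    proof
      assume "x \<in> Nodes u"
      then have "length w \<le> length x" using w(3) \<open>prefix s x\<close> by blast
      with \<open>length (x @ [c]) \<le> length w\<close> show False by simp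
    qed
    moreover have "sublist (x @ [c]) u"
      using sublist_order.order.trans[OF prefix_imp_sublist[OF snoc.prems(1)] Nodes_imp_sublist[OF w(1)]] .
    moreover have "i \<in> Occ x u" using snoc.IH x_w snoc.prems(2) by simp
    then have ext: "i \<in> Occ (x @ [u ! (i + length x)]) u"
      by (rule Occ_snoc_nth) (use snoc.prems(2) in simp)
    then have "sublist (x @ [u ! (i + length x)]) u" using sublist_iff_Occ_nonempty by blast
    ultimately have "c = u ! (i + length x)" by (rule right_extension_unique)
    with ext show ?thesis by simp
  qed
qed

lemma locus_prefix_Occ_from_superword:
  assumes "locus u s w" "prefix x w" "i + length x \<le> length u"
    and "length P + i \<in> Occ s (P @ u @ Q)"
  shows "i \<in> Occ x u"
proof (cases "length x \<le> length s")
  case True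
  have "prefix s w" using assms(1) unfolding locus_def by simp
  then have "prefix x s" by (rule prefix_length_prefix[OF assms(2) _ True])
  then have eq: "x = take (length x) s" by (auto simp: prefix_def)
  have "length P + i \<in> Occ x (P @ u @ Q)" by (subst eq) (rule Occ_take[OF assms(4) True])
  then show ?thesis using Occ_append_shift_iff[OF assms(3)] by simp
next
  case False
  then have "i + length s \<le> length u" using assms(3) by simp
  then have "i \<in> Occ s u" using Occ_append_shift_iff assms(4) by blast
  then show ?thesis using Occ_extend_to_locus[OF assms(1) _ assms(2,3)] by simp
qed

lemma Delta_le_iff: "Delta w u \<le> m \<longleftrightarrow> (\<forall>x. prefix x w \<longrightarrow> maxgap x u \<le> m)"
proof -
  have "{maxgap x u | x. prefix x w} = (\<lambda>x. maxgap x u) ` set (prefixes w)" by auto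
  then have "finite {maxgap x u | x. prefix x w}" "{maxgap x u | x. prefix x w} \<noteq> {}"
    by auto
  then show ?thesis by (auto simp: Delta_def Max_le_iff)
qed

lemma seed_imp_Delta_le:
  assumes "locus u s w" "seed s u"
  shows "Delta w u \<le> length s"
  unfolding Delta_le_iff
proof (intro allI impI)
  fix x assume x: "prefix x w"
  obtain P Q where "covers s (P @ u @ Q)" using assms(2) by (auto simp: seed_def sublist_def)
  then show "maxgap x u \<le> length s"
    by (rule covers_maxgap_le) (rule locus_prefix_Occ_from_superword[OF assms(1) x])
qed

theorem lemma4:
  fixes u s w :: "'a list"
  assumes "s \<noteq> []" and "sublist s u"
    and "w \<in> Nodes u" and "prefix s w"
    and "\<forall>w' \<in> Nodes u. prefix s w' \<longrightarrow> length w \<le> length w'"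
  shows "seed s u \<longleftrightarrow> (length s \<ge> Delta w u \<and> border_seed s u)"
proof -
  have locus: "locus u s w" using assms(3-5) unfolding locus_def by blast
  obtain A M B where split: "u = A @ M @ B" "prefix s M" "suffix s M"
      "length A = first_occ s u" "length A + length M = last_occ s u + length s"
    and border: "border_seed s u \<longleftrightarrow> seed s (A @ s @ B)"
    using border_split[OF assms(2)] .
  show ?thesis
  proof
    assume seed: "seed s u"
    then have "seed s (A @ s @ B)"
      using seed_replace_middle[OF split(2,3) prefix_order.refl suffix_order.refl covers_self] split(1)
      by simp
    then show "Delta w u \<le> length s \<and> border_seed s u"
      using seed_imp_Delta_le[OF locus seed] border by blast
  next
    assume "Delta w u \<le> length s \<and> border_seed s u"
    then have gap: "maxgap s u \<le> length s" and "seed s (A @ s @ B)"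
      using Delta_le_iff assms(4) border by blast+
    moreover have "covers s M" by (rule maxgap_le_imp_covers_middle[OF assms(2) gap split(1,4,5)])
    ultimately show "seed s u"
      using seed_replace_middle[OF prefix_order.refl suffix_order.refl split(2,3)] split(1) by simp
  qed
qed

end
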